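(* Let $L\in\mathbb N$, let $\Lambda=\Lambda_L$, and let $W=S_1C_1S_2C_2$ be a walk of the form described below. Then there is a unitary operator (walk) $W_d$ on $\mathcal H$ such that $W_L=P_LW_dP_L^*$ is unitary on $P_L\mathcal H=\ell^2(\Lambda_L)\otimes\mathbb C^2$, and $W-W_d$ differs from zero only on the set $(\Delta\Lambda)_2=\{x\in\mathbb Z^2:\operatorname{dist}(x,\Delta\Lambda)\le 2\}$, i.e. $\langle x,s|(W-W_d)|y,s'\rangle=0$ unless $x,y\in(\Delta\Lambda)_2$.
   Context: $\mathcal H=\ell^2(\mathbb Z^2)\otimes\mathbb C^2$ with basis $|x,s\rangle$, $x\in\mathbb Z^2$, $s\in\{\pm1\}$. A walk of the considered form is $W=S_1C_1S_2C_2$, where each coin operator $C_j=\bigoplus_{x\in\mathbb Z^2}C_j(x)$ acts as $|x\rangle\otimes\psi\mapsto|x\rangle\otimes C_j(x)\psi$ with $C_j(x)$ a unitary $2\times2$ matrix, and the state-dependent shifts are $S_\alpha=\sum_{s=\pm1}t_\alpha^s\otimes P_s$, where $t_\alpha|x\rangle=|x+e_\alpha\rangle$ and $P_{\pm1}$ is the projection onto $|{\pm1}\rangle$. $\Lambda_L=\{x\in\mathbb Z^2:|x_1|\le L,|x_2|\le L\}$, $P_L:\mathcal H\to\ell^2(\Lambda_L)\otimes\mathbb C^2$ is the canonical projection, and $\Delta\Lambda$ is the boundary of the square $\{x:-L-1\le x_1\le L,\ -L-1\le x_2\le L\}$, i.e. the set of its points with $x_1\in\{-L-1,L\}$ or $x_2\in\{-L-1,L\}$.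 $\operatorname{dist}$ denotes the Euclidean distance in $\mathbb Z^2$. *)

theory Defs
  imports "HOL-Analysis.Analysis"
begin

text \<open>Basis vectors |x,s> of H = l2(Z^2) (x) C^2 are indexed by (x,s) with x :: int \<times> int
  and the spin s encoded as a bool: True stands for s = +1, False for s = -1.
  Operators on H are represented by their matrix elements (kernels):
  K (x,s) (y,s') = <x,s| K |y,s'>.\<close>

type_synonym idx = "(int \<times> int) \<times> bool"
type_synonym kernel = "idx \<Rightarrow> idx \<Rightarrow> complex"

definition spin_val :: "bool \<Rightarrow> int" where
  "spin_val s = (if s then 1 else -1)"

definition unit_vec :: "nat \<Rightarrow> int \<times> int" where
  "unit_vec \<alpha> = (if \<alpha> = 1 then (1, 0) else (0, 1))"

definition kmult :: "kernel \<Rightarrow> kernel \<Rightarrow> kernel" where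
  "kmult A B a c = (\<Sum>\<^sub>\<infinity> b. A a b * B b c)"

definition kadj :: "kernel \<Rightarrow> kernel" where
  "kadj A a b = cnj (A b a)"

definition kid :: kernel where
  "kid a b = (if a = b then 1 else 0)"

text \<open>The kernel K defines a bounded operator on l2: boundedness tested on finitely
  supported vectors (which are dense).\<close>
definition kbounded :: "kernel \<Rightarrow> bool" where
  "kbounded K \<longleftrightarrow> (\<exists>B. \<forall>f :: idx \<Rightarrow> complex. finite {b. f b \<noteq> 0} \<longrightarrow>
      ((\<lambda>a. (cmod (\<Sum>b\<in>{b. f b \<noteq> 0}. K a b * f b))\<^sup>2) summable_on UNIV) \<and>
      (\<Sum>\<^sub>\<infinity> a. (cmod (\<Sum>b\<in>{b. f b \<noteq> 0}. K a b * f b))\<^sup>2)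
         \<le> B * (\<Sum>b\<in>{b. f b \<noteq> 0}. (cmod (f b))\<^sup>2))"

definition kunitary :: "kernel \<Rightarrow> bool" where
  "kunitary K \<longleftrightarrow> kbounded K \<and> kmult (kadj K) K = kid \<and> kmult K (kadj K) = kid"

text \<open>The compression of K to the finite-dimensional subspace spanned by the basis
  vectors indexed by A (i.e. P K P^* for the canonical projection P) is unitary there.\<close>
definition kunitary_on :: "idx set \<Rightarrow> kernel \<Rightarrow> bool" where
  "kunitary_on A K \<longleftrightarrow>
     (\<forall>a\<in>A. \<forall>c\<in>A. (\<Sum>b\<in>A. cnj (K b a) * K b c) = kid a c) \<and>
     (\<forall>a\<in>A. \<forall>c\<in>A. (\<Sum>b\<in>A. K a b * cnj (K c b)) = kid a c)"

definition unitary2 :: "(bool \<Rightarrow> bool \<Rightarrow> complex) \<Rightarrow> bool" where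
  "unitary2 M \<longleftrightarrow>
     (\<forall>a c. (\<Sum>b\<in>UNIV. cnj (M b a) * M b c) = (if a = c then 1 else 0)) \<and>
     (\<forall>a c. (\<Sum>b\<in>UNIV. M a b * cnj (M c b)) = (if a = c then 1 else 0))"

definition shift :: "nat \<Rightarrow> kernel" where
  "shift \<alpha> = (\<lambda>(x, s) (y, s'). if s = s' \<and> x = y + (spin_val s * fst (unit_vec \<alpha>),
                                               spin_val s * snd (unit_vec \<alpha>)) then 1 else 0)"

definition coin :: "(int \<times> int \<Rightarrow> bool \<Rightarrow> bool \<Rightarrow> complex) \<Rightarrow> kernel" where
  "coin C = (\<lambda>(x, s) (y, s'). if x = y then C x s s' else 0)"

definition walk :: "(int \<times> int \<Rightarrow> bool \<Rightarrow> bool \<Rightarrow> complex) \<Rightarrow>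
                    (int \<times> int \<Rightarrow> bool \<Rightarrow> bool \<Rightarrow> complex) \<Rightarrow> kernel" where
  "walk C1 C2 = kmult (shift 1) (kmult (coin C1) (kmult (shift 2) (coin C2)))"

definition box :: "nat \<Rightarrow> (int \<times> int) set" where
  "box L = {x. \<bar>fst x\<bar> \<le> int L \<and> \<bar>snd x\<bar> \<le> int L}"

definition boundary :: "nat \<Rightarrow> (int \<times> int) set" where
  "boundary L = {x. - int L - 1 \<le> fst x \<and> fst x \<le> int L \<and> - int L - 1 \<le> snd x \<and> snd x \<le> int L \<and>
                    (fst x \<in> {- int L - 1, int L} \<or> snd x \<in> {- int L - 1, int L})}"

definition zdist :: "int \<times> int \<Rightarrow> int \<times> int \<Rightarrow> real" where
  "zdist x y = sqrt (real_of_int ((fst x - fst y)\<^sup>2 + (snd x - snd y)\<^sup>2))"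

text \<open>(Delta Lambda)_2 = {x. dist(x, Delta Lambda) \<le> 2}; Delta Lambda is finite and nonempty,
  so the distance is attained.\<close>
definition boundary_nbhd2 :: "nat \<Rightarrow> (int \<times> int) set" where
  "boundary_nbhd2 L = {x. \<exists>y\<in>boundary L. zdist x y \<le> 2}"

end

theory Submission
  imports Defs
begin

text \<open>The decoupled walk W_d replaces each shift S_alpha by a cut shift, which moves the walker
  exactly as S_alpha does except that a hop across the boundary of the box Lambda_L is replaced by
  a spin flip in place. A cut shift still permutes the basis, so W_d is unitary; each of its
  factors maps sites inside Lambda_L to sites inside and sites outside to sites outside, so the
  compression P_L W_d P_L^* is unitary as well. Finally, a matrix element of W - W_d is a sum over
  two-hop paths one of whose hops crosses the boundary of Lambda_L, and both ends of such a path
  lie within distance 2 of Delta Lambda.\<close>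

section \<open>Kernel calculus\<close>

lemma kmult_eq_sum:
  assumes "finite F" and "\<And>b. b \<notin> F \<Longrightarrow> A a b * B b c = 0"
  shows "kmult A B a c = (\<Sum>b\<in>F. A a b * B b c)"
proof -
  have "kmult A B a c = (\<Sum>\<^sub>\<infinity>b\<in>F. A a b * B b c)"
    unfolding kmult_def by (rule infsum_cong_neutral) (use assms(2) in auto)
  then show ?thesis
    using assms(1) by simp
qed

lemma kmult_nonzero:
  assumes "kmult A B a c \<noteq> 0"
  obtains b where "A a b \<noteq> 0" and "B b c \<noteq> 0"
proof -
  have "(\<lambda>b. A a b * B b c) \<noteq> (\<lambda>_. 0)"
    using assms by (auto simp: kmult_def)
  then show thesis
    using that by fastforce
qed

lemma kmult_neqE:
  assumes "kmult A B a c \<noteq> kmult A' B' a c"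
  obtains b where "A a b \<noteq> A' a b" and "B b c \<noteq> 0 \<or> B' b c \<noteq> 0"
    | b where "A a b \<noteq> 0" and "A a b = A' a b" and "B b c \<noteq> B' b c"
proof -
  have "(\<lambda>b. A a b * B b c) \<noteq> (\<lambda>b. A' a b * B' b c)"
    using assms by (auto simp: kmult_def)
  then obtain b where "A a b * B b c \<noteq> A' a b * B' b c"
    by blast
  then show thesis
    using that(1)[of b] that(2)[of b] by (metis mult_zero_left mult_zero_right)
qed

definition kfinite :: "kernel \<Rightarrow> bool" where
  "kfinite K \<longleftrightarrow> (\<forall>c. finite {a. K a c \<noteq> 0}) \<and> (\<forall>a. finite {b. K a b \<noteq> 0})"

lemma kfinite_row: "kfinite K \<Longrightarrow> finite {b. K a b \<noteq> 0}"
  unfolding kfinite_def by blast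

lemma kfinite_col: "kfinite K \<Longrightarrow> finite {a. K a c \<noteq> 0}"
  unfolding kfinite_def by blast

lemma kmult_eq_row_sum: "kfinite A \<Longrightarrow> kmult A B a c = (\<Sum>b | A a b \<noteq> 0. A a b * B b c)"
  by (rule kmult_eq_sum) (auto intro: kfinite_row)

lemma kmult_eq_col_sum: "kfinite B \<Longrightarrow> kmult A B a c = (\<Sum>b | B b c \<noteq> 0. A a b * B b c)"
  by (rule kmult_eq_sum) (auto intro: kfinite_col)

lemma kmult_assoc:
  assumes "kfinite A" and "kfinite C"
  shows "kmult (kmult A B) C = kmult A (kmult B C)"
proof (intro ext)
  fix a d
  let ?Fb = "{b. A a b \<noteq> 0}" and ?Fc = "{c. C c d \<noteq> 0}"
  have "kmult (kmult A B) C a d = (\<Sum>c\<in>?Fc. (\<Sum>b\<in>?Fb. A a b * B b c) * C c d)"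
    using assms by (simp add: kmult_eq_col_sum kmult_eq_row_sum)
  also have "\<dots> = (\<Sum>b\<in>?Fb. \<Sum>c\<in>?Fc. A a b * B b c * C c d)"
    by (simp add: sum_distrib_right sum.swap[of _ ?Fc])
  also have "\<dots> = kmult A (kmult B C) a d"
    using assms by (simp add: kmult_eq_col_sum kmult_eq_row_sum sum_distrib_left mult.assoc)
  finally show "kmult (kmult A B) C a d = kmult A (kmult B C) a d" .
qed

lemma kfinite_kmult:
  assumes "kfinite A" and "kfinite B"
  shows "kfinite (kmult A B)"
  unfolding kfinite_def
proof (intro conjI allI)
  fix a c
  have "{a. kmult A B a c \<noteq> 0} \<subseteq> (\<Union>b\<in>{b. B b c \<noteq> 0}. {a. A a b \<noteq> 0})"
    by (auto elim: kmult_nonzero)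
  then show "finite {a. kmult A B a c \<noteq> 0}"
    by (rule finite_subset) (intro finite_UN_I kfinite_col assms)
  have "{c. kmult A B a c \<noteq> 0} \<subseteq> (\<Union>b\<in>{b. A a b \<noteq> 0}. {c. B b c \<noteq> 0})"
    by (auto elim: kmult_nonzero)
  then show "finite {c. kmult A B a c \<noteq> 0}"
    by (rule finite_subset) (intro finite_UN_I kfinite_row assms)
qed

lemma kfinite_kadj: "kfinite K \<Longrightarrow> kfinite (kadj K)"
  by (simp add: kfinite_def kadj_def)

lemma kmult_kid_left: "kmult kid K = K"
proof (intro ext)
  fix a c
  show "kmult kid K a c = K a c"
    by (subst kmult_eq_sum[where F = "{a}"]) (auto simp: kid_def)
qed

lemma kadj_kmult:
  assumes "kfinite A"
  shows "kadj (kmult A B) = kmult (kadj B) (kadj A)"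
proof (intro ext)
  fix a c
  have "kadj (kmult A B) a c = (\<Sum>b | A c b \<noteq> 0. kadj B a b * kadj A b c)"
    using assms by (simp add: kadj_def kmult_eq_row_sum mult.commute)
  also have "\<dots> = kmult (kadj B) (kadj A) a c"
    using assms by (intro kmult_eq_sum[symmetric]) (auto simp: kadj_def intro: kfinite_row)
  finally show "kadj (kmult A B) a c = kmult (kadj B) (kadj A) a c" .
qed

definition kfinite_unitary :: "kernel \<Rightarrow> bool" where
  "kfinite_unitary K \<longleftrightarrow> kfinite K \<and> kmult (kadj K) K = kid \<and> kmult K (kadj K) = kid"

lemma kfinite_unitary_kmult:
  assumes "kfinite_unitary A" and "kfinite_unitary B"
  shows "kfinite_unitary (kmult A B)"
proof -
  have fin: "kfinite A" "kfinite (kadj A)" "kfinite B" "kfinite (kadj B)"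
    using assms by (auto simp: kfinite_unitary_def intro: kfinite_kadj)
  have "kmult (kmult (kadj B) (kadj A)) (kmult A B) = kmult (kadj B) (kmult (kmult (kadj A) A) B)"
    using fin by (simp add: kmult_assoc kfinite_kmult)
  also have "\<dots> = kid"
    using assms by (simp add: kfinite_unitary_def kmult_kid_left)
  finally have left: "kmult (kmult (kadj B) (kadj A)) (kmult A B) = kid" .
  have "kmult (kmult A B) (kmult (kadj B) (kadj A)) = kmult A (kmult (kmult B (kadj B)) (kadj A))"
    using fin by (simp add: kmult_assoc kfinite_kmult)
  also have "\<dots> = kid"
    using assms by (simp add: kfinite_unitary_def kmult_kid_left)
  finally have right: "kmult (kmult A B) (kmult (kadj B) (kadj A)) = kid" .
  show ?thesis
    using left right fin by (simp add: kfinite_unitary_def kadj_kmult kfinite_kmult)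
qed

lemma kisometry_sum_norm_eq:
  assumes iso: "kmult (kadj K) K = kid" and "finite S" and "finite G"
    and outside: "\<And>a b. b \<in> S \<Longrightarrow> a \<notin> G \<Longrightarrow> K a b = 0"
  shows "(\<Sum>a\<in>G. (cmod (\<Sum>b\<in>S. K a b * f b))\<^sup>2) = (\<Sum>b\<in>S. (cmod (f b))\<^sup>2)"
proof -
  define g where "g a = (\<Sum>b\<in>S. K a b * f b)" for a
  have orth: "(\<Sum>a\<in>G. cnj (K a b') * K a b) = kid b' b" if "b \<in> S" for b b'
  proof -
    have "(\<Sum>a\<in>G. cnj (K a b') * K a b) = kmult (kadj K) K b' b"
      by (subst kmult_eq_sum[where F = G])
        (use \<open>finite G\<close> that outside in \<open>auto simp: kadj_def\<close>)
    then show ?thesis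
      using iso by simp
  qed
  have "complex_of_real (\<Sum>a\<in>G. (cmod (g a))\<^sup>2) = (\<Sum>a\<in>G. g a * cnj (g a))"
    unfolding of_real_sum complex_norm_square ..
  also have "\<dots> = (\<Sum>a\<in>G. \<Sum>b\<in>S. \<Sum>b'\<in>S. (K a b * f b) * (cnj (K a b') * cnj (f b')))"
    unfolding g_def by (simp add: sum_product)
  also have "\<dots> = (\<Sum>b\<in>S. \<Sum>b'\<in>S. \<Sum>a\<in>G. (K a b * f b) * (cnj (K a b') * cnj (f b')))"
    by (subst sum.swap) (rule sum.cong[OF refl], rule sum.swap)
  also have "\<dots> = (\<Sum>b\<in>S. \<Sum>b'\<in>S. (f b * cnj (f b')) * (\<Sum>a\<in>G. cnj (K a b') * K a b))"
    by (simp add: sum_distrib_left mult_ac)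
  also have "\<dots> = (\<Sum>b\<in>S. \<Sum>b'\<in>S. (f b * cnj (f b')) * kid b' b)"
    using orth by simp
  also have "\<dots> = (\<Sum>b\<in>S. f b * cnj (f b))"
    using \<open>finite S\<close> by (simp add: kid_def if_distrib cong: if_cong)
  also have "\<dots> = complex_of_real (\<Sum>b\<in>S. (cmod (f b))\<^sup>2)"
    unfolding of_real_sum complex_norm_square ..
  finally show ?thesis
    unfolding g_def using of_real_eq_iff by blast
qed

lemma kbounded_if_isometry:
  assumes fin: "kfinite K" and iso: "kmult (kadj K) K = kid"
  shows "kbounded K"
  unfolding kbounded_def
proof (intro exI allI impI conjI)
  fix f :: "idx \<Rightarrow> complex"
  define S where "S = {b. f b \<noteq> 0}"
  define G where "G = (\<Union>b\<in>S. {a. K a b \<noteq> 0})"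
  assume "finite {b. f b \<noteq> 0}"
  then have "finite S" and "finite G"
    unfolding G_def S_def by (auto intro: kfinite_col fin)
  have outside: "(\<Sum>b\<in>S. K a b * f b) = 0" if "a \<notin> G" for a
    by (rule sum.neutral) (use that in \<open>auto simp: G_def\<close>)
  then show "(\<lambda>a. (cmod (\<Sum>b\<in>{b. f b \<noteq> 0}. K a b * f b))\<^sup>2) summable_on UNIV"
    unfolding S_def[symmetric] using \<open>finite G\<close>
    by (subst summable_on_cong_neutral[where T = G]) auto
  have "(\<Sum>\<^sub>\<infinity>a. (cmod (\<Sum>b\<in>S. K a b * f b))\<^sup>2) = (\<Sum>a\<in>G. (cmod (\<Sum>b\<in>S. K a b * f b))\<^sup>2)"
    using outside \<open>finite G\<close> by (subst infsum_cong_neutral[where T = G]) auto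
  also have "\<dots> = (\<Sum>b\<in>S. (cmod (f b))\<^sup>2)"
    by (rule kisometry_sum_norm_eq[OF iso \<open>finite S\<close> \<open>finite G\<close>]) (auto simp: G_def)
  finally show "(\<Sum>\<^sub>\<infinity>a. (cmod (\<Sum>b\<in>{b. f b \<noteq> 0}. K a b * f b))\<^sup>2)
      \<le> 1 * (\<Sum>b\<in>{b. f b \<noteq> 0}. (cmod (f b))\<^sup>2)"
    by (simp add: S_def)
qed

lemma kunitary_if_kfinite_unitary: "kfinite_unitary K \<Longrightarrow> kunitary K"
  unfolding kfinite_unitary_def kunitary_def using kbounded_if_isometry by blast

definition kreduces :: "idx set \<Rightarrow> kernel \<Rightarrow> bool" where
  "kreduces A K \<longleftrightarrow> (\<forall>a c. K a c \<noteq> 0 \<longrightarrow> (a \<in> A \<longleftrightarrow> c \<in> A))"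

lemma kreducesD: "kreduces A K \<Longrightarrow> K a c \<noteq> 0 \<Longrightarrow> a \<in> A \<longleftrightarrow> c \<in> A"
  unfolding kreduces_def by blast

lemma kreduces_kmult:
  assumes "kreduces A K" and "kreduces A K'"
  shows "kreduces A (kmult K K')"
  unfolding kreduces_def
proof (intro allI impI)
  fix a c
  assume "kmult K K' a c \<noteq> 0"
  then obtain b where "K a b \<noteq> 0" and "K' b c \<noteq> 0"
    by (rule kmult_nonzero)
  then show "a \<in> A \<longleftrightarrow> c \<in> A"
    using assms by (blast dest: kreducesD)
qed

lemma kunitary_on_if_kreduces:
  assumes "finite A" and "kreduces A K"
    and "kmult (kadj K) K = kid" and "kmult K (kadj K) = kid"
  shows "kunitary_on A K"
  unfolding kunitary_on_def
proof (intro conjI ballI)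
  fix a c
  assume "a \<in> A" "c \<in> A"
  have "(\<Sum>b\<in>A. cnj (K b a) * K b c) = kmult (kadj K) K a c"
    by (subst kmult_eq_sum[where F = A])
      (use assms(1,2) \<open>a \<in> A\<close> in \<open>auto simp: kadj_def dest: kreducesD\<close>)
  then show "(\<Sum>b\<in>A. cnj (K b a) * K b c) = kid a c"
    using assms(3) by simp
  have "(\<Sum>b\<in>A. K a b * cnj (K c b)) = kmult K (kadj K) a c"
    by (subst kmult_eq_sum[where F = A])
      (use assms(1,2) \<open>a \<in> A\<close> in \<open>auto simp: kadj_def dest: kreducesD\<close>)
  then show "(\<Sum>b\<in>A. K a b * cnj (K c b)) = kid a c"
    using assms(4) by simp
qed

definition kperm :: "(idx \<Rightarrow> idx) \<Rightarrow> kernel" where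
  "kperm p a b = (if b = p a then 1 else 0)"

lemma kmult_kperm_left: "kmult (kperm p) K a c = K (p a) c"
  by (subst kmult_eq_sum[where F = "{p a}"]) (auto simp: kperm_def)

lemma kfinite_unitary_kperm:
  assumes "bij p"
  shows "kfinite_unitary (kperm p)"
  unfolding kfinite_unitary_def
proof (intro conjI)
  have "{a. kperm p a c \<noteq> 0} = {inv p c}" and "{b. kperm p a b \<noteq> 0} = {p a}" for a c
    using assms by (auto simp: kperm_def bij_inv_eq_iff)
  then show "kfinite (kperm p)"
    by (simp add: kfinite_def)
  show "kmult (kadj (kperm p)) (kperm p) = kid"
  proof (intro ext)
    fix a c
    show "kmult (kadj (kperm p)) (kperm p) a c = kid a c"
      by (subst kmult_eq_sum[where F = "{inv p a}"])
        (use assms in \<open>auto simp: kperm_def kadj_def kid_def bij_inv_eq_iff\<close>)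
  qed
  show "kmult (kperm p) (kadj (kperm p)) = kid"
    using bij_is_inj[OF assms]
    by (intro ext) (auto simp: kmult_kperm_left kperm_def kadj_def kid_def dest: injD)
qed

lemma kreduces_kperm: "(\<And>a. p a \<in> A \<longleftrightarrow> a \<in> A) \<Longrightarrow> kreduces A (kperm p)"
  by (simp add: kreduces_def kperm_def)

lemma coin_nonzero_same_site: "coin C a b \<noteq> 0 \<Longrightarrow> fst b = fst a"
  by (auto simp: coin_def split: prod.splits if_splits)

lemma kreduces_coin: "kreduces (S \<times> UNIV) (coin C)"
  by (auto simp: kreduces_def dest: coin_nonzero_same_site)

lemma kfinite_unitary_coin:
  assumes "\<forall>x. unitary2 (C x)"
  shows "kfinite_unitary (coin C)"
  unfolding kfinite_unitary_def
proof (intro conjI)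
  have "finite {a. coin C a c \<noteq> 0}" for c
    by (rule finite_subset[of _ "{fst c} \<times> UNIV"]) (auto dest: coin_nonzero_same_site)
  moreover have "finite {b. coin C a b \<noteq> 0}" for a
    by (rule finite_subset[of _ "{fst a} \<times> UNIV"]) (auto dest: coin_nonzero_same_site)
  ultimately show "kfinite (coin C)"
    unfolding kfinite_def by blast
  show "kmult (kadj (coin C)) (coin C) = kid"
  proof (intro ext)
    fix a c :: idx
    obtain x s y s' where ac: "a = (x, s)" "c = (y, s')"
      by (cases a, cases c) auto
    have "(\<Sum>b\<in>UNIV. cnj (C x b s) * C x b s') = (if s = s' then 1 else 0)"
      using assms unfolding unitary2_def by blast
    then show "kmult (kadj (coin C)) (coin C) a c = kid a c"
      unfolding ac by (subst kmult_eq_sum[where F = "{x} \<times> UNIV"])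
        (auto simp: coin_def kadj_def kid_def UNIV_bool add.commute)
  qed
  show "kmult (coin C) (kadj (coin C)) = kid"
  proof (intro ext)
    fix a c :: idx
    obtain x s y s' where ac: "a = (x, s)" "c = (y, s')"
      by (cases a, cases c) auto
    have "(\<Sum>b\<in>UNIV. C x s b * cnj (C x s' b)) = (if s = s' then 1 else 0)"
      using assms unfolding unitary2_def by blast
    then show "kmult (coin C) (kadj (coin C)) a c = kid a c"
      unfolding ac by (subst kmult_eq_sum[where F = "{x} \<times> UNIV"])
        (auto simp: coin_def kadj_def kid_def UNIV_bool add.commute)
  qed
qed

section \<open>Cut shifts and the decoupled walk\<close>

definition spin_hop :: "int \<times> int \<Rightarrow> idx \<Rightarrow> int \<times> int" where
  "spin_hop v a = (if snd a then fst a + v else fst a - v)"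

definition cut_hop :: "(int \<times> int) set \<Rightarrow> int \<times> int \<Rightarrow> idx \<Rightarrow> idx" where
  "cut_hop B v a =
     (if (fst a \<in> B) = (spin_hop v a \<in> B) then (spin_hop v a, snd a) else (fst a, \<not> snd a))"

lemma cut_hop_cut_hop_uminus: "cut_hop B (- v) (cut_hop B v a) = a"
  by (cases a) (auto simp: cut_hop_def spin_hop_def)

lemma bij_cut_hop: "bij (cut_hop B v)"
  using cut_hop_cut_hop_uminus[of B v] cut_hop_cut_hop_uminus[of B "- v"]
  by (intro o_bij[where g = "cut_hop B (- v)"]) auto

lemma cut_hop_mem_iff: "fst (cut_hop B v a) \<in> B \<longleftrightarrow> fst a \<in> B"
  by (simp add: cut_hop_def)

lemma shift_eq_kperm_cut_hop: "shift \<alpha> = kperm (cut_hop {} (- unit_vec \<alpha>))"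
  by (intro ext)
    (auto simp: shift_def kperm_def cut_hop_def spin_hop_def unit_vec_def spin_val_def split: if_splits)

definition cut_walk :: "(int \<times> int) set \<Rightarrow> (int \<times> int \<Rightarrow> bool \<Rightarrow> bool \<Rightarrow> complex) \<Rightarrow>
    (int \<times> int \<Rightarrow> bool \<Rightarrow> bool \<Rightarrow> complex) \<Rightarrow> kernel" where
  "cut_walk B C1 C2 = kmult (kperm (cut_hop B (- unit_vec 1)))
     (kmult (coin C1) (kmult (kperm (cut_hop B (- unit_vec 2))) (coin C2)))"

lemma walk_eq_cut_walk_empty: "walk C1 C2 = cut_walk {} C1 C2"
  by (simp add: walk_def cut_walk_def shift_eq_kperm_cut_hop)

lemma kfinite_unitary_cut_walk:
  assumes "\<forall>x. unitary2 (C1 x)" and "\<forall>x. unitary2 (C2 x)"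
  shows "kfinite_unitary (cut_walk B C1 C2)"
  unfolding cut_walk_def
  by (intro kfinite_unitary_kmult kfinite_unitary_kperm kfinite_unitary_coin bij_cut_hop assms)

lemma kreduces_cut_walk: "kreduces (B \<times> UNIV) (cut_walk B C1 C2)"
  unfolding cut_walk_def
  by (intro kreduces_kmult kreduces_kperm kreduces_coin) (auto simp: mem_Times_iff cut_hop_mem_iff)

section \<open>The difference of the two walks\<close>

definition edge_sites :: "(int \<times> int) set \<Rightarrow> int \<times> int \<Rightarrow> (int \<times> int) set" where
  "edge_sites B u = {x. (x \<in> B) \<noteq> (x + u \<in> B) \<or> (x \<in> B) \<noteq> (x - u \<in> B)}"

lemma edge_sites_uminus: "edge_sites B (- u) = edge_sites B u"
  by (auto simp: edge_sites_def)

lemma fst_cut_hop: "fst (cut_hop B v a) \<in> {fst a, spin_hop v a}"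
  by (simp add: cut_hop_def)

lemma kperm_nonzeroD: "kperm p a b \<noteq> 0 \<Longrightarrow> b = p a"
  by (simp add: kperm_def split: if_splits)

lemma kperm_cut_hop_neq_edge_sites:
  assumes "kperm (cut_hop {} v) a b \<noteq> kperm (cut_hop B v) a b"
  shows "fst a \<in> edge_sites B v" and "fst b \<in> edge_sites B v"
proof -
  have "cut_hop B v a \<noteq> cut_hop {} v a" and "b \<in> {cut_hop {} v a, cut_hop B v a}"
    using assms by (auto simp: kperm_def split: if_splits)
  then show "fst a \<in> edge_sites B v" and "fst b \<in> edge_sites B v"
    by (auto simp: cut_hop_def spin_hop_def edge_sites_def split: if_splits)
qed

lemma coin_cut_hop_coin_nonzero:
  assumes "kmult (coin C1) (kmult (kperm (cut_hop B v)) (coin C2)) b c \<noteq> 0"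
  shows "fst c \<in> {fst b, fst b + v, fst b - v}"
proof -
  obtain b' where "coin C1 b b' \<noteq> 0" and "kmult (kperm (cut_hop B v)) (coin C2) b' c \<noteq> 0"
    using assms by (rule kmult_nonzero)
  from this(2) obtain b'' where "kperm (cut_hop B v) b' b'' \<noteq> 0" and "coin C2 b'' c \<noteq> 0"
    by (rule kmult_nonzero)
  then have "fst c = fst (cut_hop B v b')"
    by (auto dest: kperm_nonzeroD coin_nonzero_same_site)
  moreover have "fst b' = fst b"
    using \<open>coin C1 b b' \<noteq> 0\<close> by (rule coin_nonzero_same_site)
  ultimately show ?thesis
    using fst_cut_hop[of B v b'] by (auto simp: spin_hop_def)
qed

lemma coin_cut_hop_coin_neq_edge_sites:
  assumes "kmult (coin C1) (kmult (kperm (cut_hop {} v)) (coin C2)) b c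
    \<noteq> kmult (coin C1) (kmult (kperm (cut_hop B v)) (coin C2)) b c"
  shows "fst b \<in> edge_sites B v" and "fst c \<in> edge_sites B v"
proof -
  obtain b' where "coin C1 b b' \<noteq> 0"
    and "kmult (kperm (cut_hop {} v)) (coin C2) b' c \<noteq> kmult (kperm (cut_hop B v)) (coin C2) b' c"
    using assms by (cases rule: kmult_neqE) auto
  from this(2) obtain b'' where "kperm (cut_hop {} v) b' b'' \<noteq> kperm (cut_hop B v) b' b''"
    and "coin C2 b'' c \<noteq> 0"
    by (cases rule: kmult_neqE) auto
  moreover have "fst b' = fst b"
    using \<open>coin C1 b b' \<noteq> 0\<close> by (rule coin_nonzero_same_site)
  ultimately show "fst b \<in> edge_sites B v" and "fst c \<in> edge_sites B v"
    using kperm_cut_hop_neq_edge_sites[of v b' b'' B] by (auto dest: coin_nonzero_same_site)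
qed

lemma walk_ne_cut_walk_edge_sites:
  assumes "walk C1 C2 a c \<noteq> cut_walk B C1 C2 a c"
  shows "fst a \<in> edge_sites B (unit_vec 1)
      \<and> (\<exists>y\<in>edge_sites B (unit_vec 1). fst c \<in> {y, y + unit_vec 2, y - unit_vec 2})
    \<or> fst c \<in> edge_sites B (unit_vec 2)
      \<and> (\<exists>y\<in>edge_sites B (unit_vec 2). fst a \<in> {y, y + unit_vec 1, y - unit_vec 1})"
proof -
  let ?rest = "\<lambda>B. kmult (coin C1) (kmult (kperm (cut_hop B (- unit_vec 2))) (coin C2))"
  have "kmult (kperm (cut_hop {} (- unit_vec 1))) (?rest {}) a c
      \<noteq> kmult (kperm (cut_hop B (- unit_vec 1))) (?rest B) a c"
    using assms unfolding walk_eq_cut_walk_empty cut_walk_def .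
  then show ?thesis
  proof (cases rule: kmult_neqE)
    case (1 b)
    then have "fst a \<in> edge_sites B (unit_vec 1)" and "fst b \<in> edge_sites B (unit_vec 1)"
      using kperm_cut_hop_neq_edge_sites[of "- unit_vec 1" a b B] by (simp_all add: edge_sites_uminus)
    moreover have "fst c \<in> {fst b, fst b - unit_vec 2, fst b + unit_vec 2}"
      using 1(2) coin_cut_hop_coin_nonzero[of C1 _ "- unit_vec 2"] by fastforce
    ultimately show ?thesis
      by auto
  next
    case (2 b)
    have "b = cut_hop {} (- unit_vec 1) a"
      using 2(1) by (rule kperm_nonzeroD)
    then have "fst a \<in> {fst b, fst b + unit_vec 1, fst b - unit_vec 1}"
      by (auto simp: cut_hop_def spin_hop_def)
    moreover have "fst b \<in> edge_sites B (unit_vec 2)" and "fst c \<in> edge_sites B (unit_vec 2)"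
      using coin_cut_hop_coin_neq_edge_sites[OF 2(3)] by (simp_all add: edge_sites_uminus)
    ultimately show ?thesis
      by auto
  qed
qed

lemma zdist_le_2:
  assumes "\<bar>fst x - fst y\<bar> \<le> 1" and "\<bar>snd x - snd y\<bar> \<le> 1"
  shows "zdist x y \<le> 2"
proof -
  have "(fst x - fst y)\<^sup>2 + (snd x - snd y)\<^sup>2 \<le> 4"
    using assms abs_square_le_1[of "fst x - fst y"] abs_square_le_1[of "snd x - snd y"] by linarith
  then have "zdist x y \<le> sqrt 4"
    unfolding zdist_def by (intro real_sqrt_le_mono) linarith
  then show ?thesis
    by simp
qed

lemma boundary_nbhd2_near_side:
  assumes "x1 \<in> {- int L - 1, - int L, int L, int L + 1}" and "\<bar>x2\<bar> \<le> int L + 1"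
  shows "(x1, x2) \<in> boundary_nbhd2 L" and "(x2, x1) \<in> boundary_nbhd2 L"
proof -
  define b1 where "b1 = (if x1 \<le> - int L then - int L - 1 else int L)"
  define b2 where "b2 = max (- int L - 1) (min x2 (int L))"
  have "(b1, b2) \<in> boundary L" and "(b2, b1) \<in> boundary L"
    by (auto simp: boundary_def b1_def b2_def)
  moreover have "\<bar>x1 - b1\<bar> \<le> 1" and "\<bar>x2 - b2\<bar> \<le> 1"
    using assms by (auto simp: b1_def b2_def)
  ultimately show "(x1, x2) \<in> boundary_nbhd2 L" and "(x2, x1) \<in> boundary_nbhd2 L"
    unfolding boundary_nbhd2_def
    using zdist_le_2[of "(x1, x2)" "(b1, b2)"] zdist_le_2[of "(x2, x1)" "(b2, b1)"] by auto
qed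

lemma edge_sites_box_unit_vec_1:
  assumes "(y1, y2) \<in> edge_sites (box L) (unit_vec 1)"
  shows "y1 \<in> {- int L - 1, - int L, int L, int L + 1} \<and> \<bar>y2\<bar> \<le> int L"
  using assms unfolding edge_sites_def box_def unit_vec_def by auto

lemma edge_sites_box_unit_vec_2:
  assumes "(y1, y2) \<in> edge_sites (box L) (unit_vec 2)"
  shows "y2 \<in> {- int L - 1, - int L, int L, int L + 1} \<and> \<bar>y1\<bar> \<le> int L"
  using assms unfolding edge_sites_def box_def unit_vec_def by auto

lemma boundary_nbhd2_near_edge_sites:
  shows "y \<in> edge_sites (box L) (unit_vec 1) \<Longrightarrow> z \<in> {y, y + unit_vec 2, y - unit_vec 2}
      \<Longrightarrow> z \<in> boundary_nbhd2 L"
    and "y \<in> edge_sites (box L) (unit_vec 2) \<Longrightarrow> z \<in> {y, y + unit_vec 1, y - unit_vec 1}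
      \<Longrightarrow> z \<in> boundary_nbhd2 L"
proof -
  obtain y1 y2 where y: "y = (y1, y2)"
    by fastforce
  show "z \<in> boundary_nbhd2 L"
    if edge: "y \<in> edge_sites (box L) (unit_vec 1)" and near: "z \<in> {y, y + unit_vec 2, y - unit_vec 2}"
  proof -
    obtain d where "\<bar>d\<bar> \<le> 1" and "z = (y1, y2 + d)"
      using near by (auto simp: y unit_vec_def intro: that)
    then show ?thesis
      using edge_sites_box_unit_vec_1[of y1 y2 L] edge boundary_nbhd2_near_side(1)[of y1 L "y2 + d"]
      unfolding y by auto
  qed
  show "z \<in> boundary_nbhd2 L"
    if edge: "y \<in> edge_sites (box L) (unit_vec 2)" and near: "z \<in> {y, y + unit_vec 1, y - unit_vec 1}"
  proof -
    obtain d where "\<bar>d\<bar> \<le> 1" and "z = (y1 + d, y2)"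
      using near by (auto simp: y unit_vec_def intro: that)
    then show ?thesis
      using edge_sites_box_unit_vec_2[of y1 y2 L] edge boundary_nbhd2_near_side(2)[of y2 L "y1 + d"]
      unfolding y by auto
  qed
qed

lemma walk_ne_cut_walk_box:
  assumes "walk C1 C2 a c \<noteq> cut_walk (box L) C1 C2 a c"
  shows "fst a \<in> boundary_nbhd2 L" and "fst c \<in> boundary_nbhd2 L"
  using walk_ne_cut_walk_edge_sites[OF assms] boundary_nbhd2_near_edge_sites by blast+

lemma finite_box: "finite (box L)"
proof -
  have "box L \<subseteq> {- int L..int L} \<times> {- int L..int L}"
    by (auto simp: box_def)
  then show ?thesis
    by (rule finite_subset) simp
qed

theorem mainTheorem5:
  fixes L :: nat
    and C1 C2 :: "int \<times> int \<Rightarrow> bool \<Rightarrow> bool \<Rightarrow> complex"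
  assumes "\<forall>x. unitary2 (C1 x)"
    and "\<forall>x. unitary2 (C2 x)"
  shows "\<exists>Wd :: kernel.
           kunitary Wd \<and>
           kunitary_on (box L \<times> UNIV) Wd \<and>
           (\<forall>x s y s'. walk C1 C2 (x, s) (y, s') \<noteq> Wd (x, s) (y, s') \<longrightarrow>
                x \<in> boundary_nbhd2 L \<and> y \<in> boundary_nbhd2 L)"
proof -
  have unitary: "kfinite_unitary (cut_walk (box L) C1 C2)"
    using assms by (rule kfinite_unitary_cut_walk)
  then have "kunitary (cut_walk (box L) C1 C2)"
    by (rule kunitary_if_kfinite_unitary)
  moreover have "kunitary_on (box L \<times> UNIV) (cut_walk (box L) C1 C2)"
    using unitary finite_box kreduces_cut_walk
    by (intro kunitary_on_if_kreduces) (auto simp: kfinite_unitary_def)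
  moreover have "\<forall>x s y s'. walk C1 C2 (x, s) (y, s') \<noteq> cut_walk (box L) C1 C2 (x, s) (y, s') \<longrightarrow>
      x \<in> boundary_nbhd2 L \<and> y \<in> boundary_nbhd2 L"
    using walk_ne_cut_walk_box by fastforce
  ultimately show ?thesis
    by blast
qed

end
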